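(* Let $h_{uA}(u,r,x^C)$ and symmetric $\mathring\gamma$-traceless $h_{AB}(u,r,x^C)$ be smooth, set $\check h_{uA}=h_{uA}/r^2$, $\check h_{AB}=h_{AB}/r^2$, and $V(r)=\varepsilon r-\alpha^2r^3-2m$. Let $i\ge0$ and suppose that the $i$-th $u$-derivatives of the two equations $$\partial_r\big[r^4\partial_r\check h_{uA}\big]=\mathring D^B\big[r^2\partial_r\check h_{AB}\big],$$ $$0=\partial_r\Big[r\partial_u\check h_{AB}-\tfrac12V\partial_r\check h_{AB}-\tfrac{V}{2r}\check h_{AB}-r\,\mathrm{TS}[\mathring D_A\check h_{uB}]\Big]+\Big(\frac{m}{r^2}-\alpha^2r\Big)\check h_{AB}-\mathrm{TS}[\mathring D_A\check h_{uB}]$$ hold. Define $$Q^{[3,i+1]}_A:=\mathring D^B\Big[2r\partial_u^{i+1}\check h_{AB}-V\partial_r\partial_u^i\check h_{AB}-\frac1{r^2}\partial_r\big(r^4\,\mathrm{TS}[\mathring D_A\partial_u^i\check h_{uB}]\big)+(P-\varepsilon)\partial_u^i\check h_{AB}\Big]+\alpha^2r^4\partial_r\partial_u^i\check h_{uA}+2m\big(3\partial_u^i\check h_{uA}+r\partial_r\partial_u^i\check h_{uA}\big).$$ Then $\partial_rQ^{[3,i+1]}_A=0$.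
   Context: $\mathbf S$ is a compact orientable two-dimensional manifold with metric $\mathring\gamma$ of constant Gauss curvature $\varepsilon\in\{0,\pm1\}$, Levi-Civita connection $\mathring D$; indices are raised with $\mathring\gamma$. Here $m\in\mathbb R$, $\alpha\in\mathbb R\cup i\mathbb R$ are constants, $(u,r,x^A)$ coordinates with $x^A$ on $\mathbf S$. $\mathrm{TS}[X_{AB}]=\frac12(X_{AB}+X_{BA}-\mathring\gamma^{CD}X_{CD}\mathring\gamma_{AB})$ is the traceless symmetric part, and $P$ acts on symmetric traceless tensors by $Ph_{AB}=\mathrm{TS}[\mathring D_A\mathring D^Ch_{BC}]$. *)

theory Defs
  imports "HOL-Analysis.Analysis"
begin

text \<open>Local-coordinate model. Points of spacetime are (u, r, x) with x = (x1,x2) a coordinate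
  point of a chart X of the surface S. Tensor indices A,B,... range over {0,1} (i.e. A < 2).\<close>

type_synonym pt = "real \<times> real \<times> (real \<times> real)"

definition uc :: "pt \<Rightarrow> real" where "uc p = fst p"
definition rc :: "pt \<Rightarrow> real" where "rc p = fst (snd p)"
definition xc :: "pt \<Rightarrow> real \<times> real" where "xc p = snd (snd p)"

coinductive smooth_on :: "'a::real_normed_vector set \<Rightarrow> ('a \<Rightarrow> real) \<Rightarrow> bool" where
  "f differentiable_on U \<Longrightarrow> (\<forall>v. smooth_on U (\<lambda>p. frechet_derivative f (at p) v))
     \<Longrightarrow> smooth_on U f"

definition ebasis :: "nat \<Rightarrow> real \<times> real" where
  "ebasis A = (if A = 0 then (1, 0) else (0, 1))"

definition pdx :: "nat \<Rightarrow> (real \<times> real \<Rightarrow> real) \<Rightarrow> real \<times> real \<Rightarrow> real" where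
  "pdx A f x = deriv (\<lambda>t. f (x + t *\<^sub>R ebasis A)) 0"

definition du :: "(pt \<Rightarrow> real) \<Rightarrow> pt \<Rightarrow> real" where
  "du f p = deriv (\<lambda>t. f (t, rc p, xc p)) (uc p)"

definition dr :: "(pt \<Rightarrow> real) \<Rightarrow> pt \<Rightarrow> real" where
  "dr f p = deriv (\<lambda>t. f (uc p, t, xc p)) (rc p)"

definition dx :: "nat \<Rightarrow> (pt \<Rightarrow> real) \<Rightarrow> pt \<Rightarrow> real" where
  "dx A f p = deriv (\<lambda>t. f (uc p, rc p, xc p + t *\<^sub>R ebasis A)) 0"

type_synonym metric = "nat \<Rightarrow> nat \<Rightarrow> real \<times> real \<Rightarrow> real"

definition gdet :: "metric \<Rightarrow> real \<times> real \<Rightarrow> real" where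
  "gdet g x = g 0 0 x * g 1 1 x - g 0 1 x * g 1 0 x"

definition ginv :: "metric \<Rightarrow> metric" where
  "ginv g A B x =
     (if A = 0 \<and> B = 0 then g 1 1 x / gdet g x
      else if A = 1 \<and> B = 1 then g 0 0 x / gdet g x
      else if A = 0 \<and> B = 1 then - g 0 1 x / gdet g x
      else if A = 1 \<and> B = 0 then - g 1 0 x / gdet g x else 0)"

definition Gam :: "metric \<Rightarrow> nat \<Rightarrow> nat \<Rightarrow> nat \<Rightarrow> real \<times> real \<Rightarrow> real" where
  "Gam g C A B x = (1/2) * (\<Sum>D<2. ginv g C D x *
      (pdx A (g D B) x + pdx B (g D A) x - pdx D (g A B) x))"

text \<open>Riemann tensor R^P_{SMN} = d_M \<Gamma>^P_{NS} - d_N \<Gamma>^P_{MS} + \<Gamma>^P_{ML}\<Gamma>^L_{NS} - \<Gamma>^P_{NL}\<Gamma>^L_{MS},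
  so that R(d_M,d_N) d_S = R^P_{SMN} d_P.\<close>
definition Riem :: "metric \<Rightarrow> nat \<Rightarrow> nat \<Rightarrow> nat \<Rightarrow> nat \<Rightarrow> real \<times> real \<Rightarrow> real" where
  "Riem g P S M N x = pdx M (Gam g P N S) x - pdx N (Gam g P M S) x
     + (\<Sum>L<2. Gam g P M L x * Gam g L N S x - Gam g P N L x * Gam g L M S x)"

text \<open>Gauss curvature K = R_{0101} / det g = g(R(d_0,d_1)d_1, d_0)/det g.\<close>
definition gauss_curv :: "metric \<Rightarrow> real \<times> real \<Rightarrow> real" where
  "gauss_curv g x = (\<Sum>E<2. g 0 E x * Riem g E 1 0 1 x) / gdet g x"

definition cov1 :: "metric \<Rightarrow> nat \<Rightarrow> (nat \<Rightarrow> pt \<Rightarrow> real) \<Rightarrow> nat \<Rightarrow> pt \<Rightarrow> real" where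
  "cov1 g A w B p = dx A (w B) p - (\<Sum>C<2. Gam g C A B (xc p) * w C p)"

definition cov2 :: "metric \<Rightarrow> nat \<Rightarrow> (nat \<Rightarrow> nat \<Rightarrow> pt \<Rightarrow> real) \<Rightarrow> nat \<Rightarrow> nat \<Rightarrow> pt \<Rightarrow> real" where
  "cov2 g C T A B p = dx C (T A B) p
     - (\<Sum>D<2. Gam g D C A (xc p) * T D B p) - (\<Sum>D<2. Gam g D C B (xc p) * T A D p)"

definition divT :: "metric \<Rightarrow> (nat \<Rightarrow> nat \<Rightarrow> pt \<Rightarrow> real) \<Rightarrow> nat \<Rightarrow> pt \<Rightarrow> real" where
  "divT g T A p = (\<Sum>B<2. \<Sum>C<2. ginv g B C (xc p) * cov2 g C T A B p)"

definition TS :: "metric \<Rightarrow> (nat \<Rightarrow> nat \<Rightarrow> pt \<Rightarrow> real) \<Rightarrow> nat \<Rightarrow> nat \<Rightarrow> pt \<Rightarrow> real" where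
  "TS g X A B p = (1/2) * (X A B p + X B A p
     - (\<Sum>C<2. \<Sum>D<2. ginv g C D (xc p) * X C D p) * g A B (xc p))"

definition Pop :: "metric \<Rightarrow> (nat \<Rightarrow> nat \<Rightarrow> pt \<Rightarrow> real) \<Rightarrow> nat \<Rightarrow> nat \<Rightarrow> pt \<Rightarrow> real" where
  "Pop g T = TS g (\<lambda>A B. cov1 g A (divT g T) B)"

definition Vfun :: "real \<Rightarrow> real \<Rightarrow> real \<Rightarrow> real \<Rightarrow> real" where
  "Vfun eps a2 m r = eps * r - a2 * r ^ 3 - 2 * m"

end

theory Submission
  imports Defs
begin

text \<open>Every operator in the two equations is built from \<open>\<partial>\<^sub>r\<close>, multiplication by functions
  of \<open>r\<close> and covariant derivatives on \<open>S\<close>, and each of them commutes with \<open>\<partial>\<^sub>u\<close> on smooth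
  fields (symmetry of second derivatives). Hence the \<open>i\<close>-th \<open>u\<close>-derivatives of the equations are
  the same equations for \<open>H = \<partial>\<^sub>u\<^sup>i hch\<close>, \<open>H' = \<partial>\<^sub>u H\<close>, \<open>W = \<partial>\<^sub>u\<^sup>i hcu\<close>, and it
  suffices to show \<open>\<partial>\<^sub>r Q = 0\<close> for arbitrary smooth fields \<open>H\<close>, \<open>H'\<close>, \<open>W\<close> satisfying them.
  Applying \<open>TS[D\<^sub>A \<cdot>]\<close> to the first equation gives
  \<open>\<partial>\<^sub>r (r\<^sup>4 \<partial>\<^sub>r TS[D\<^sub>A W\<^sub>B]) = r\<^sup>2 P(\<partial>\<^sub>r H)\<^sub>A\<^sub>B\<close>; together with the second
  equation this makes the radial derivative of the bracket in \<open>Q\<close> equal to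
  \<open>(V/r - \<epsilon>) \<partial>\<^sub>r H\<^sub>A\<^sub>B\<close>. By the first equation again its divergence is
  \<open>-(\<alpha>\<^sup>2 + 2m/r\<^sup>3) \<partial>\<^sub>r (r\<^sup>4 \<partial>\<^sub>r W\<^sub>A)\<close>, which cancels the radial derivative of the
  remaining terms of \<open>Q\<close>.\<close>

section \<open>Directional derivatives of smooth functions\<close>

definition dir_deriv :: "'a::real_normed_vector \<Rightarrow> ('a \<Rightarrow> real) \<Rightarrow> 'a \<Rightarrow> real" where
  "dir_deriv v f p = deriv (\<lambda>t. f (p + t *\<^sub>R v)) 0"

lemma has_derivative_along_line:
  assumes "(f has_derivative f') (at (a + s *\<^sub>R v))"
  shows "((\<lambda>s. f (a + s *\<^sub>R v)) has_real_derivative f' v) (at s)"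
proof -
  have "((f \<circ> (\<lambda>t. a + t *\<^sub>R v)) has_derivative (f' \<circ> (\<lambda>t. t *\<^sub>R v))) (at s)"
    by (rule diff_chain_at) (use assms in \<open>auto intro!: derivative_eq_intros\<close>)
  moreover have "f' \<circ> (\<lambda>t. t *\<^sub>R v) = (*) (f' v)"
    using linear_cmul[OF has_derivative_linear[OF assms]] by (auto simp: fun_eq_iff)
  ultimately show ?thesis by (simp add: has_field_derivative_def o_def)
qed

lemma dir_deriv_eq:
  assumes "(f has_derivative f') (at p)"
  shows "dir_deriv v f p = f' v"
  unfolding dir_deriv_def
  by (rule DERIV_imp_deriv, rule has_derivative_along_line[of f f' p 0]) (use assms in simp)

lemma dir_deriv_frechet: "f differentiable (at p) \<Longrightarrow> dir_deriv v f p = frechet_derivative f (at p) v"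
  by (rule dir_deriv_eq) (simp add: frechet_derivative_works[symmetric])

lemma dir_deriv_cong:
  assumes "open U" "x \<in> U" and "\<forall>y\<in>U. f y = g y"
  shows "dir_deriv v f x = dir_deriv v g x"
proof -
  have "((\<lambda>t::real. x + t *\<^sub>R v) \<longlongrightarrow> x + 0 *\<^sub>R v) (nhds 0)"
    by (intro tendsto_intros filterlim_ident)
  then have "\<forall>\<^sub>F t in nhds 0. x + t *\<^sub>R v \<in> U"
    using topological_tendstoD[OF _ assms(1)] assms(2) by simp
  then have "\<forall>\<^sub>F t in nhds 0. f (x + t *\<^sub>R v) = g (x + t *\<^sub>R v)"
    by eventually_elim (use assms(3) in blast)
  then show ?thesis unfolding dir_deriv_def by (rule deriv_cong_ev) simp
qed

lemma dir_deriv_const [simp]: "dir_deriv v (\<lambda>x. c) p = 0"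
  by (simp add: dir_deriv_def)

lemma dir_deriv_const_along: "(\<And>t. c (p + t *\<^sub>R v) = c p) \<Longrightarrow> dir_deriv v c p = 0"
  by (simp add: dir_deriv_def)

lemma dir_deriv_linear: "bounded_linear L \<Longrightarrow> dir_deriv v L x = L v"
  by (rule dir_deriv_eq) (rule bounded_linear_imp_has_derivative)

lemma smooth_on_differentiable_on: "smooth_on U f \<Longrightarrow> f differentiable_on U"
  by (subst (asm) smooth_on.simps) blast

lemma smooth_on_frechet_derivative:
  "smooth_on U f \<Longrightarrow> smooth_on U (\<lambda>p. frechet_derivative f (at p) v)"
  by (subst (asm) smooth_on.simps) blast

lemma smooth_on_differentiable_at:
  "smooth_on U f \<Longrightarrow> open U \<Longrightarrow> x \<in> U \<Longrightarrow> f differentiable (at x)"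
  using smooth_on_differentiable_on[of U f] at_within_open[of x U]
  by (metis differentiable_on_def)

lemma smooth_on_has_derivative:
  "smooth_on U f \<Longrightarrow> open U \<Longrightarrow> x \<in> U \<Longrightarrow> (f has_derivative (\<lambda>h. dir_deriv h f x)) (at x)"
  using smooth_on_differentiable_at[of U f x] dir_deriv_frechet[of f x]
  by (simp add: frechet_derivative_works[symmetric])

text \<open>Closure properties of \<^const>\<open>smooth_on\<close> are proved coinductively up to this algebra:
  it contains the smooth functions and is closed under taking derivatives.\<close>
inductive smooth_alg :: "'a::real_normed_vector set \<Rightarrow> ('a \<Rightarrow> real) \<Rightarrow> bool" for U where
  smooth: "smooth_on U f \<Longrightarrow> smooth_alg U f"
| const: "smooth_alg U (\<lambda>x. c)"
| linear: "bounded_linear f \<Longrightarrow> smooth_alg U f"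
| add: "smooth_alg U f \<Longrightarrow> smooth_alg U g \<Longrightarrow> smooth_alg U (\<lambda>x. f x + g x)"
| mult: "smooth_alg U f \<Longrightarrow> smooth_alg U g \<Longrightarrow> smooth_alg U (\<lambda>x. f x * g x)"
| inverse: "smooth_on U f \<Longrightarrow> (\<forall>x\<in>U. f x \<noteq> 0) \<Longrightarrow> smooth_alg U (\<lambda>x. inverse (f x))"
| eq_on: "smooth_alg U f \<Longrightarrow> (\<forall>x\<in>U. f x = g x) \<Longrightarrow> smooth_alg U g"

lemma smooth_alg_differentiable:
  assumes U: "open U" and "smooth_alg U f" "x \<in> U"
  shows "f differentiable (at x)"
  using assms(2,3)
proof (induction arbitrary: x)
  case (smooth f)
  then show ?case by (rule smooth_on_differentiable_at[OF _ U])
next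
  case (const c)
  then show ?case by simp
next
  case (linear f)
  then show ?case by (simp add: bounded_linear_imp_differentiable)
next
  case (add f g)
  then show ?case by (simp add: differentiable_add)
next
  case (mult f g)
  then show ?case by (simp add: differentiable_mult)
next
  case (inverse f)
  have "f differentiable (at x)"
    by (rule smooth_on_differentiable_at[OF inverse.hyps(1) U inverse.prems])
  then obtain D where "(f has_derivative D) (at x)" unfolding differentiable_def by blast
  from Deriv.has_derivative_inverse[OF _ this] inverse.hyps(2) inverse.prems show ?case
    unfolding differentiable_def by blast
next
  case (eq_on f g)
  have "f differentiable (at x)" by (rule eq_on.IH[OF eq_on.prems])
  then obtain D where D: "(f has_derivative D) (at x)" unfolding differentiable_def by blast
  have "(g has_derivative D) (at x)"
    by (rule has_derivative_transform_within_open[OF D U eq_on.prems]) (use eq_on.hyps(2) in auto)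
  then show ?case unfolding differentiable_def by blast
qed

lemma smooth_alg_frechet_derivative_intro:
  assumes "\<And>x. x \<in> U \<Longrightarrow> (f has_derivative D x) (at x)" and "smooth_alg U (\<lambda>x. D x v)"
  shows "smooth_alg U (\<lambda>x. frechet_derivative f (at x) v)"
proof (rule smooth_alg.eq_on[OF assms(2)], intro ballI)
  fix x assume "x \<in> U"
  then show "D x v = frechet_derivative f (at x) v"
    using frechet_derivative_at[OF assms(1)] by simp
qed

lemma smooth_alg_frechet_derivative:
  assumes U: "open U" and "smooth_alg U f"
  shows "smooth_alg U (\<lambda>x. frechet_derivative f (at x) v)"
  using assms(2)
proof induction
  case (smooth f)
  then show ?case by (intro smooth_alg.smooth smooth_on_frechet_derivative)
next
  case (const c)
  then show ?case by (simp add: smooth_alg.const)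
next
  case (linear f)
  have "frechet_derivative f (at x) = f" for x
    by (rule frechet_derivative_at[OF bounded_linear_imp_has_derivative[OF linear.hyps], symmetric])
  then show ?case by (simp add: smooth_alg.const)
next
  case (add f g)
  note df = smooth_alg_differentiable[OF U add.hyps(1), THEN frechet_derivative_works[THEN iffD1]]
  note dg = smooth_alg_differentiable[OF U add.hyps(2), THEN frechet_derivative_works[THEN iffD1]]
  show ?case
    by (rule smooth_alg_frechet_derivative_intro[OF has_derivative_add[OF df dg]])
      (simp_all add: smooth_alg.add add.IH)
next
  case (mult f g)
  note df = smooth_alg_differentiable[OF U mult.hyps(1), THEN frechet_derivative_works[THEN iffD1]]
  note dg = smooth_alg_differentiable[OF U mult.hyps(2), THEN frechet_derivative_works[THEN iffD1]]
  show ?case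
    by (rule smooth_alg_frechet_derivative_intro[OF has_derivative_mult[OF df dg]])
      (simp_all add: smooth_alg.add smooth_alg.mult mult.IH mult.hyps)
next
  case (inverse f)
  note df = smooth_on_differentiable_at[OF inverse.hyps(1) U,
      THEN frechet_derivative_works[THEN iffD1]]
  have "smooth_alg U (\<lambda>x. (-1) * (inverse (f x) * frechet_derivative f (at x) v * inverse (f x)))"
    by (intro smooth_alg.mult smooth_alg.const smooth_alg.inverse smooth_alg.smooth
        smooth_on_frechet_derivative inverse.hyps)
  then show ?case
    by (intro smooth_alg_frechet_derivative_intro[OF Deriv.has_derivative_inverse[OF _ df]])
      (use inverse.hyps(2) in simp_all)
next
  case (eq_on f g)
  show ?case
  proof (rule smooth_alg.eq_on[OF eq_on.IH], intro ballI)
    fix x assume x: "x \<in> U"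
    have "frechet_derivative f (at x) = frechet_derivative g (at x)"
      by (rule frechet_derivative_transform_within_open[OF
            smooth_alg_differentiable[OF U eq_on.hyps(1) x] U x]) (use eq_on.hyps(2) in blast)
    then show "frechet_derivative f (at x) v = frechet_derivative g (at x) v" by simp
  qed
qed

lemma smooth_alg_smooth_on: assumes "open U" "smooth_alg U f" shows "smooth_on U f"
  using assms(2)
proof (coinduction arbitrary: f)
  case (smooth_on f)
  have "f differentiable_on U"
    using smooth_alg_differentiable[OF assms(1) smooth_on]
    by (simp add: differentiable_at_imp_differentiable_on)
  moreover have "\<forall>v. smooth_alg U (\<lambda>p. frechet_derivative f (at p) v)"
    using smooth_alg_frechet_derivative[OF assms(1) smooth_on] by blast
  ultimately show ?case by auto
qed

lemma smooth_on_const: "open U \<Longrightarrow> smooth_on U (\<lambda>x. c)"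
  by (rule smooth_alg_smooth_on) (simp_all add: smooth_alg.const)

lemma smooth_on_linear: "open U \<Longrightarrow> bounded_linear L \<Longrightarrow> smooth_on U L"
  by (rule smooth_alg_smooth_on) (simp_all add: smooth_alg.linear)

lemma smooth_on_compose_linear:
  assumes U: "open U" and V: "open V" and L: "bounded_linear L" and LU: "L ` U \<subseteq> V"
    and "smooth_on V \<phi>"
  shows "smooth_on U (\<lambda>x. \<phi> (L x))"
proof -
  have "smooth_on U F" if "smooth_on V \<phi>" "\<forall>x\<in>U. F x = \<phi> (L x)" for F \<phi>
    using that
  proof (coinduction arbitrary: F \<phi>)
    case (smooth_on F \<phi>)
    have D: "(F has_derivative (\<lambda>h. frechet_derivative \<phi> (at (L x)) (L h))) (at x)"
      if x: "x \<in> U" for x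
    proof -
      have "(\<phi> has_derivative frechet_derivative \<phi> (at (L x))) (at (L x))"
        using smooth_on_differentiable_at[OF smooth_on(1) V] LU x frechet_derivative_works by blast
      then have "((\<lambda>x. \<phi> (L x)) has_derivative (\<lambda>h. frechet_derivative \<phi> (at (L x)) (L h))) (at x)"
        using diff_chain_at[OF bounded_linear_imp_has_derivative[OF L]] by (simp add: o_def)
      then show ?thesis
        by (rule has_derivative_transform_within_open[OF _ U x]) (use smooth_on(2) in auto)
    qed
    have "F differentiable (at x)" if "x \<in> U" for x
      using D[OF that] unfolding differentiable_def by blast
    then have diff: "F differentiable_on U" by (simp add: differentiable_at_imp_differentiable_on)
    have deriv: "frechet_derivative F (at x) v = frechet_derivative \<phi> (at (L x)) (L v)"
      if "x \<in> U" for x v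
      by (simp add: frechet_derivative_at[OF D[OF that], symmetric])
    show ?case
    proof (rule exI[of _ F], rule exI[of _ U], intro conjI refl allI disjI1 diff)
      fix v
      show "\<exists>F' \<phi>'. U = U \<and> (\<lambda>p. frechet_derivative F (at p) v) = F' \<and> smooth_on V \<phi>'
          \<and> (\<forall>x\<in>U. F' x = \<phi>' (L x))"
        using smooth_on_frechet_derivative[OF smooth_on(1), where v="L v"] deriv by auto
    qed
  qed
  from this[OF assms(5), of "\<lambda>x. \<phi> (L x)"] show ?thesis by simp
qed

lemma smooth_on_add:
  "open U \<Longrightarrow> smooth_on U f \<Longrightarrow> smooth_on U g \<Longrightarrow> smooth_on U (\<lambda>x. f x + g x)"
  by (rule smooth_alg_smooth_on) (simp_all add: smooth_alg.add smooth_alg.smooth)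

lemma smooth_on_mult:
  "open U \<Longrightarrow> smooth_on U f \<Longrightarrow> smooth_on U g \<Longrightarrow> smooth_on U (\<lambda>x. f x * g x)"
  by (rule smooth_alg_smooth_on) (simp_all add: smooth_alg.mult smooth_alg.smooth)

lemma smooth_on_inverse:
  "open U \<Longrightarrow> smooth_on U f \<Longrightarrow> (\<forall>x\<in>U. f x \<noteq> 0) \<Longrightarrow> smooth_on U (\<lambda>x. inverse (f x))"
  by (rule smooth_alg_smooth_on) (simp_all add: smooth_alg.inverse)

lemma smooth_on_minus:
  assumes "open U" "smooth_on U f" shows "smooth_on U (\<lambda>x. - f x)"
  using smooth_on_mult[OF assms(1) smooth_on_const[OF assms(1), of "-1"] assms(2)] by simp

lemma smooth_on_diff:
  assumes "open U" "smooth_on U f" "smooth_on U g" shows "smooth_on U (\<lambda>x. f x - g x)"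
  using smooth_on_add[OF assms(1,2) smooth_on_minus[OF assms(1,3)]] by simp

lemma smooth_on_divide:
  assumes "open U" "smooth_on U f" "smooth_on U g" "\<forall>x\<in>U. g x \<noteq> 0"
  shows "smooth_on U (\<lambda>x. f x / g x)"
  using smooth_on_mult[OF assms(1,2) smooth_on_inverse[OF assms(1,3,4)]]
  by (simp add: divide_inverse)

lemma smooth_on_power: "open U \<Longrightarrow> smooth_on U f \<Longrightarrow> smooth_on U (\<lambda>x. f x ^ n)"
  by (induction n) (simp_all add: smooth_on_const smooth_on_mult)

lemma smooth_on_sum:
  assumes "open U" "finite I" "\<And>i. i \<in> I \<Longrightarrow> smooth_on U (f i)"
  shows "smooth_on U (\<lambda>x. \<Sum>i\<in>I. f i x)"
  using assms(2,3) by induction (simp_all add: assms(1) smooth_on_const smooth_on_add)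

lemma smooth_on_dir_deriv:
  assumes "open U" "smooth_on U f"
  shows "smooth_on U (dir_deriv v f)"
proof -
  have "\<forall>x\<in>U. frechet_derivative f (at x) v = dir_deriv v f x"
    using dir_deriv_frechet smooth_on_differentiable_at[OF assms(2,1)] by metis
  then show ?thesis
    using smooth_alg.eq_on[OF smooth_alg.smooth[OF smooth_on_frechet_derivative[OF assms(2)]]]
    by (intro smooth_alg_smooth_on[OF assms(1)]) blast
qed

lemma dir_deriv_add:
  "open U \<Longrightarrow> smooth_on U f \<Longrightarrow> smooth_on U g \<Longrightarrow> x \<in> U \<Longrightarrow>
    dir_deriv v (\<lambda>x. f x + g x) x = dir_deriv v f x + dir_deriv v g x"
  by (rule dir_deriv_eq) (intro has_derivative_add smooth_on_has_derivative)

lemma dir_deriv_diff: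
  "open U \<Longrightarrow> smooth_on U f \<Longrightarrow> smooth_on U g \<Longrightarrow> x \<in> U \<Longrightarrow>
    dir_deriv v (\<lambda>x. f x - g x) x = dir_deriv v f x - dir_deriv v g x"
  by (rule dir_deriv_eq) (intro has_derivative_diff smooth_on_has_derivative)

lemma dir_deriv_minus:
  "open U \<Longrightarrow> smooth_on U f \<Longrightarrow> x \<in> U \<Longrightarrow> dir_deriv v (\<lambda>x. - f x) x = - dir_deriv v f x"
  by (rule dir_deriv_eq) (intro has_derivative_minus smooth_on_has_derivative)

lemma dir_deriv_mult:
  "open U \<Longrightarrow> smooth_on U f \<Longrightarrow> smooth_on U g \<Longrightarrow> x \<in> U \<Longrightarrow>
    dir_deriv v (\<lambda>x. f x * g x) x = f x * dir_deriv v g x + dir_deriv v f x * g x"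
  by (rule dir_deriv_eq) (intro has_derivative_mult smooth_on_has_derivative)

lemma dir_deriv_divide:
  "open U \<Longrightarrow> smooth_on U f \<Longrightarrow> smooth_on U g \<Longrightarrow> x \<in> U \<Longrightarrow> g x \<noteq> 0 \<Longrightarrow>
    dir_deriv v (\<lambda>x. f x / g x) x
      = - f x * (inverse (g x) * dir_deriv v g x * inverse (g x)) + dir_deriv v f x / g x"
  by (rule dir_deriv_eq) (intro has_derivative_divide smooth_on_has_derivative)

lemma dir_deriv_power:
  "open U \<Longrightarrow> smooth_on U f \<Longrightarrow> x \<in> U \<Longrightarrow>
    dir_deriv v (\<lambda>x. f x ^ n) x = of_nat n * dir_deriv v f x * f x ^ (n - 1)"
  by (rule dir_deriv_eq) (intro has_derivative_power smooth_on_has_derivative)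

lemma dir_deriv_sum:
  "open U \<Longrightarrow> finite I \<Longrightarrow> (\<And>i. i \<in> I \<Longrightarrow> smooth_on U (f i)) \<Longrightarrow> x \<in> U \<Longrightarrow>
    dir_deriv v (\<lambda>x. \<Sum>i\<in>I. f i x) x = (\<Sum>i\<in>I. dir_deriv v (f i) x)"
  by (rule dir_deriv_eq) (intro has_derivative_sum smooth_on_has_derivative)

section \<open>Symmetry of second derivatives\<close>

lemma second_difference_mean_value:
  fixes f :: "'a::real_normed_vector \<Rightarrow> real"
  assumes fd: "\<And>q. q \<in> U \<Longrightarrow> (f has_derivative f' q) (at q)" and h: "0 < h"
    and segments: "\<And>s. 0 \<le> s \<Longrightarrow> s \<le> h \<Longrightarrow> p + h *\<^sub>R w + s *\<^sub>R v \<in> U \<and> p + s *\<^sub>R v \<in> U"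
  obtains \<xi> where "0 < \<xi>" "\<xi> < h"
    and "f (p + h *\<^sub>R v + h *\<^sub>R w) - f (p + h *\<^sub>R v) - f (p + h *\<^sub>R w) + f p
      = h * (f' (p + h *\<^sub>R w + \<xi> *\<^sub>R v) v - f' (p + \<xi> *\<^sub>R v) v)"
proof -
  define \<phi> where "\<phi> s = f (p + h *\<^sub>R w + s *\<^sub>R v) - f (p + s *\<^sub>R v)" for s
  have "(\<phi> has_real_derivative f' (p + h *\<^sub>R w + s *\<^sub>R v) v - f' (p + s *\<^sub>R v) v) (at s)"
    if "0 \<le> s" "s \<le> h" for s
    using segments[OF that] unfolding \<phi>_def by (intro DERIV_diff has_derivative_along_line fd) auto
  from MVT2[OF h this] obtain \<xi> where "0 < \<xi>" "\<xi> < h"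
    and "\<phi> h - \<phi> 0 = (h - 0) * (f' (p + h *\<^sub>R w + \<xi> *\<^sub>R v) v - f' (p + \<xi> *\<^sub>R v) v)"
    by blast
  moreover have "\<phi> h - \<phi> 0 = f (p + h *\<^sub>R v + h *\<^sub>R w) - f (p + h *\<^sub>R v) - f (p + h *\<^sub>R w) + f p"
    unfolding \<phi>_def by (simp add: ac_simps)
  ultimately show ?thesis using that by simp
qed

lemma second_difference_estimate:
  fixes f :: "'a::real_normed_vector \<Rightarrow> real"
  assumes U: "open U" "p \<in> U"
    and fd: "\<And>q. q \<in> U \<Longrightarrow> (f has_derivative f' q) (at q)"
    and dA: "((\<lambda>q. f' q v) has_derivative A) (at p)"
    and e: "e > 0"
  obtains d where "d > 0"
    and "\<And>h. 0 < h \<Longrightarrow> h * (norm v + norm w + 1) < d \<Longrightarrow>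
      \<bar>f (p + h *\<^sub>R v + h *\<^sub>R w) - f (p + h *\<^sub>R v) - f (p + h *\<^sub>R w) + f p - h * h * A w\<bar>
        \<le> 2 * e * h * h * (norm v + norm w + 1)"
proof -
  define C where "C = norm v + norm w + 1"
  obtain d0 where d0: "d0 > 0" "ball p d0 \<subseteq> U" using U open_contains_ball by blast
  obtain d1 where d1: "d1 > 0"
    "\<And>y. norm (y - p) < d1 \<Longrightarrow> norm (f' y v - f' p v - A (y - p)) \<le> e * norm (y - p)"
    using dA[unfolded has_derivative_at_alt] e by blast
  have lin: "linear A" using dA by (rule has_derivative_linear)
  show ?thesis
  proof (rule that[of "min d0 d1"])
    show "min d0 d1 > 0" using d0 d1 by simp
    fix h assume h: "0 < h" and hC: "h * (norm v + norm w + 1) < min d0 d1"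
    have small: "norm (s *\<^sub>R v + t *\<^sub>R w) \<le> h * C"
      if "0 \<le> s" "s \<le> h" "0 \<le> t" "t \<le> h" for s t
    proof -
      have "norm (s *\<^sub>R v + t *\<^sub>R w) \<le> s * norm v + t * norm w"
        using norm_triangle_ineq[of "s *\<^sub>R v" "t *\<^sub>R w"] that by simp
      also have "\<dots> \<le> h * C"
        using that h mult_right_mono[of s h "norm v"] mult_right_mono[of t h "norm w"]
        by (simp add: C_def distrib_left)
      finally show ?thesis .
    qed
    have near: "norm (s *\<^sub>R v + t *\<^sub>R w) < min d0 d1"
      if "0 \<le> s" "s \<le> h" "0 \<le> t" "t \<le> h" for s t
      using small[OF that] hC unfolding C_def by linarith
    have inU: "p + (s *\<^sub>R v + t *\<^sub>R w) \<in> U" if "0 \<le> s" "s \<le> h" "0 \<le> t" "t \<le> h" for s t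
    proof -
      have "dist p (p + (s *\<^sub>R v + t *\<^sub>R w)) < d0"
        using near[OF that] norm_minus_cancel[of "s *\<^sub>R v + t *\<^sub>R w"] by (simp add: dist_norm)
      then show ?thesis using d0(2) by auto
    qed
    have "p + h *\<^sub>R w + s *\<^sub>R v \<in> U \<and> p + s *\<^sub>R v \<in> U" if "0 \<le> s" "s \<le> h" for s
      using inU[of s h] inU[of s 0] that h by (simp add: ac_simps)
    from second_difference_mean_value[OF fd h this] obtain \<xi> where \<xi>: "0 < \<xi>" "\<xi> < h"
      and mv: "f (p + h *\<^sub>R v + h *\<^sub>R w) - f (p + h *\<^sub>R v) - f (p + h *\<^sub>R w) + f p
        = h * (f' (p + h *\<^sub>R w + \<xi> *\<^sub>R v) v - f' (p + \<xi> *\<^sub>R v) v)"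
      by blast
    define y1 where "y1 = p + h *\<^sub>R w + \<xi> *\<^sub>R v"
    define y2 where "y2 = p + \<xi> *\<^sub>R v"
    have "norm (y1 - p) < d1" "norm (y2 - p) < d1"
      using near[of \<xi> h] near[of \<xi> 0] \<xi> h by (simp_all add: y1_def y2_def ac_simps)
    moreover have "norm (y1 - p) \<le> h * C" "norm (y2 - p) \<le> h * C"
      using small[of \<xi> h] small[of \<xi> 0] \<xi> h by (simp_all add: y1_def y2_def ac_simps)
    ultimately have "\<bar>f' y1 v - f' p v - A (y1 - p)\<bar> \<le> e * (h * C)"
      and "\<bar>f' y2 v - f' p v - A (y2 - p)\<bar> \<le> e * (h * C)"
      using d1(2) e by (smt (verit) mult_left_mono real_norm_def)+
    moreover have "A (y1 - p) - A (y2 - p) = h * A w"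
      unfolding y1_def y2_def using lin by (simp add: linear_add linear_scale algebra_simps)
    ultimately have "\<bar>(f' y1 v - f' y2 v) - h * A w\<bar> \<le> 2 * e * (h * C)"
      by linarith
    then show "\<bar>f (p + h *\<^sub>R v + h *\<^sub>R w) - f (p + h *\<^sub>R v) - f (p + h *\<^sub>R w) + f p
        - h * h * A w\<bar> \<le> 2 * e * h * h * (norm v + norm w + 1)"
      using h unfolding mv y1_def y2_def C_def
      by (simp add: abs_mult mult_left_mono right_diff_distrib[symmetric] mult.assoc
          mult.left_commute)
  qed
qed

text \<open>Both second derivatives are limits of \<open>h\<^sup>-\<^sup>2\<close> times the second difference
  \<open>f (p + h v + h w) - f (p + h v) - f (p + h w) + f p\<close>, which is symmetric in \<open>v\<close> and \<open>w\<close>.\<close>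
lemma has_derivative_second_symmetric:
  fixes f :: "'a::real_normed_vector \<Rightarrow> real"
  assumes U: "open U" "p \<in> U"
    and fd: "\<And>q. q \<in> U \<Longrightarrow> (f has_derivative f' q) (at q)"
    and dA: "((\<lambda>q. f' q v) has_derivative A) (at p)"
    and dB: "((\<lambda>q. f' q w) has_derivative B) (at p)"
  shows "A w = B v"
proof -
  define C where "C = norm v + norm w + 1"
  have C: "C > 0" unfolding C_def by (simp add: add_nonneg_pos)
  have bound: "\<bar>A w - B v\<bar> \<le> 4 * e * C" if e: "e > 0" for e
  proof -
    obtain d1 where d1: "d1 > 0" "\<And>h. 0 < h \<Longrightarrow> h * C < d1 \<Longrightarrow>
      \<bar>f (p + h *\<^sub>R v + h *\<^sub>R w) - f (p + h *\<^sub>R v) - f (p + h *\<^sub>R w) + f p - h * h * A w\<bar>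
        \<le> 2 * e * h * h * C"
      using second_difference_estimate[OF U fd dA e, of w] unfolding C_def by blast
    obtain d2 where d2: "d2 > 0" "\<And>h. 0 < h \<Longrightarrow> h * C < d2 \<Longrightarrow>
      \<bar>f (p + h *\<^sub>R w + h *\<^sub>R v) - f (p + h *\<^sub>R w) - f (p + h *\<^sub>R v) + f p - h * h * B v\<bar>
        \<le> 2 * e * h * h * C"
      using second_difference_estimate[OF U fd dB e, of v] unfolding C_def by (auto simp: ac_simps)
    define h where "h = min d1 d2 / (2 * C)"
    have h: "h > 0" "h * C < d1" "h * C < d2"
      using d1(1) d2(1) C by (auto simp: h_def field_simps)
    define \<Delta> where "\<Delta> = f (p + h *\<^sub>R v + h *\<^sub>R w) - f (p + h *\<^sub>R v) - f (p + h *\<^sub>R w) + f p"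
    have "(\<Delta> - h * h * B v) - (\<Delta> - h * h * A w) = (h * h) * (A w - B v)"
      by (simp add: algebra_simps)
    then have "h * h * \<bar>A w - B v\<bar> = \<bar>(\<Delta> - h * h * B v) - (\<Delta> - h * h * A w)\<bar>"
      by (simp add: abs_mult)
    also have "\<dots> \<le> \<bar>\<Delta> - h * h * B v\<bar> + \<bar>\<Delta> - h * h * A w\<bar>"
      by (rule abs_triangle_ineq4)
    also have "\<dots> \<le> h * h * (4 * e * C)"
      using d1(2)[OF h(1,2)] d2(2)[OF h(1,3)] unfolding \<Delta>_def by (simp add: ac_simps)
    finally have "h * h * \<bar>A w - B v\<bar> \<le> h * h * (4 * e * C)" .
    then show ?thesis using h by (simp add: mult_le_cancel_left_pos)
  qed
  show ?thesis
  proof (rule ccontr)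
    assume ne: "A w \<noteq> B v"
    have "\<bar>A w - B v\<bar> \<le> 4 * (\<bar>A w - B v\<bar> / (8 * C)) * C"
      using ne C by (intro bound) simp
    then show False using ne C by simp
  qed
qed

lemma dir_deriv_commute:
  assumes U: "open U" and f: "smooth_on U f" and p: "p \<in> U"
  shows "dir_deriv v (dir_deriv w f) p = dir_deriv w (dir_deriv v f) p"
proof -
  have df: "\<And>q. q \<in> U \<Longrightarrow> (f has_derivative (\<lambda>h. dir_deriv h f q)) (at q)"
    by (rule smooth_on_has_derivative[OF f U])
  have "((\<lambda>q. dir_deriv u f q) has_derivative (\<lambda>h. dir_deriv h (dir_deriv u f) p)) (at p)" for u
    by (rule smooth_on_has_derivative[OF smooth_on_dir_deriv[OF U f] U p])
  from has_derivative_second_symmetric[OF U p df this this] show ?thesis by simp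
qed

definition e_u :: pt where "e_u = (1, 0, 0)"
definition e_r :: pt where "e_r = (0, 1, 0)"
definition e_x :: "nat \<Rightarrow> pt" where "e_x A = (0, 0, ebasis A)"

definition region :: "(real \<times> real) set \<Rightarrow> pt set" where
  "region X = {p. 0 < rc p \<and> xc p \<in> X}"

lemma rc_e_u [simp]: "rc e_u = 0" and xc_e_u [simp]: "xc e_u = 0"
  and rc_e_r [simp]: "rc e_r = 1" and xc_e_r [simp]: "xc e_r = 0"
  and rc_e_x [simp]: "rc (e_x A) = 0" and xc_e_x [simp]: "xc (e_x A) = ebasis A"
  by (simp_all add: e_u_def e_r_def e_x_def rc_def xc_def zero_prod_def)

lemma rc_add [simp]: "rc (p + q) = rc p + rc q" and xc_add [simp]: "xc (p + q) = xc p + xc q"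
  and rc_scaleR [simp]: "rc (t *\<^sub>R p) = t * rc p" and xc_scaleR [simp]: "xc (t *\<^sub>R p) = t *\<^sub>R xc p"
  by (simp_all add: rc_def xc_def)

lemma bounded_linear_rc: "bounded_linear rc"
  unfolding rc_def by (intro bounded_linear_compose[OF bounded_linear_fst bounded_linear_snd])

lemma bounded_linear_xc: "bounded_linear xc"
  unfolding xc_def by (intro bounded_linear_compose[OF bounded_linear_snd bounded_linear_snd])

lemma du_eq_dir_deriv: "du = dir_deriv e_u"
proof (intro ext)
  fix f :: "pt \<Rightarrow> real" and p :: pt
  obtain a b x where p: "p = (a, b, x)" by (cases p) auto
  have "du f p = deriv ((\<lambda>t. f (t, b, x)) \<circ> (+) a) 0"
    unfolding deriv_shift_0[symmetric] by (simp add: du_def p uc_def rc_def xc_def)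
  then show "du f p = dir_deriv e_u f p"
    by (simp add: dir_deriv_def p e_u_def o_def zero_prod_def[symmetric])
qed

lemma dr_eq_dir_deriv: "dr = dir_deriv e_r"
proof (intro ext)
  fix f :: "pt \<Rightarrow> real" and p :: pt
  obtain a b x where p: "p = (a, b, x)" by (cases p) auto
  have "dr f p = deriv ((\<lambda>t. f (a, t, x)) \<circ> (+) b) 0"
    unfolding deriv_shift_0[symmetric] by (simp add: dr_def p uc_def rc_def xc_def)
  then show "dr f p = dir_deriv e_r f p"
    by (simp add: dir_deriv_def p e_r_def o_def zero_prod_def[symmetric])
qed

lemma dx_eq_dir_deriv: "dx A = dir_deriv (e_x A)"
  by (intro ext) (simp add: dx_def dir_deriv_def e_x_def uc_def rc_def xc_def split_paired_all)

lemma pdx_eq_dir_deriv: "pdx A = dir_deriv (ebasis A)"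
  by (intro ext) (simp add: pdx_def dir_deriv_def)

lemma open_region: "open X \<Longrightarrow> open (region X)"
proof -
  assume X: "open X"
  have "region X = {p. 0 < rc p} \<inter> xc -` X" by (auto simp: region_def)
  moreover have "open {p. 0 < rc p}"
    by (rule open_Collect_less) (auto intro: linear_continuous_on bounded_linear_rc)
  moreover have "open (xc -` X)"
    by (rule open_vimage[OF X]) (auto intro: linear_continuous_on bounded_linear_xc)
  ultimately show ?thesis by auto
qed

lemma rc_nonzero_region [simp]: "p \<in> region X \<Longrightarrow> rc p \<noteq> 0"
  by (auto simp: region_def)

lemma dir_deriv_rc [simp]: "dir_deriv v rc p = rc v"
  by (rule dir_deriv_linear[OF bounded_linear_rc])

lemma dir_deriv_vertical_lift [simp]: "xc v = 0 \<Longrightarrow> dir_deriv v (\<lambda>q. \<phi> (xc q)) p = 0"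
  by (simp add: dir_deriv_def)

section \<open>Tensor calculus on a chart\<close>

locale chart =
  fixes g :: metric and X :: "(real \<times> real) set"
  assumes open_chart: "open X"
    and smooth_metric: "\<And>A B. smooth_on X (g A B)"
    and gdet_nonzero: "\<And>x. x \<in> X \<Longrightarrow> gdet g x \<noteq> 0"
begin

lemma open_region_chart [simp]: "open (region X)"
  by (rule open_region[OF open_chart])

lemma smooth_on_ginv: "smooth_on X (ginv g A B)"
proof -
  have "smooth_on X (gdet g)"
    unfolding gdet_def[abs_def]
    by (intro smooth_on_diff smooth_on_mult open_chart smooth_metric)
  then have "smooth_on X (\<lambda>x. f x / gdet g x)" if "smooth_on X f" for f
    using gdet_nonzero by (intro smooth_on_divide open_chart that) auto
  moreover have "smooth_on X (\<lambda>x. if P then f x else h x)"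
    if "smooth_on X f" "smooth_on X h" for P f h
    using that by (cases P) simp_all
  ultimately show ?thesis
    unfolding ginv_def[abs_def]
    by (simp add: smooth_on_minus smooth_on_const open_chart smooth_metric)
qed

lemma smooth_on_Gam: "smooth_on X (Gam g C A B)"
  unfolding Gam_def[abs_def] pdx_eq_dir_deriv
  by (intro smooth_on_mult smooth_on_const smooth_on_sum smooth_on_add smooth_on_diff
      smooth_on_dir_deriv smooth_metric smooth_on_ginv open_chart finite_lessThan)

lemma smooth_on_region_lift: "smooth_on X \<phi> \<Longrightarrow> smooth_on (region X) (\<lambda>q. \<phi> (xc q))"
proof -
  have "xc ` region X \<subseteq> X" unfolding region_def by blast
  then show "smooth_on X \<phi> \<Longrightarrow> smooth_on (region X) (\<lambda>q. \<phi> (xc q))"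
    by (rule smooth_on_compose_linear[OF open_region_chart open_chart bounded_linear_xc])
qed

lemmas smooth_on_region_intros [simp] =
  smooth_on_const[OF open_region_chart] smooth_on_add[OF open_region_chart]
  smooth_on_mult[OF open_region_chart] smooth_on_diff[OF open_region_chart]
  smooth_on_minus[OF open_region_chart] smooth_on_power[OF open_region_chart]
  smooth_on_sum[OF open_region_chart] smooth_on_dir_deriv[OF open_region_chart]
  smooth_on_divide[OF open_region_chart]
  smooth_on_linear[OF open_region_chart bounded_linear_rc]
  smooth_on_region_lift[OF smooth_metric] smooth_on_region_lift[OF smooth_on_ginv]
  smooth_on_region_lift[OF smooth_on_Gam]

lemmas dir_deriv_region_simps =
  dir_deriv_add[OF open_region_chart] dir_deriv_diff[OF open_region_chart]
  dir_deriv_mult[OF open_region_chart] dir_deriv_minus[OF open_region_chart]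
  dir_deriv_power[OF open_region_chart] dir_deriv_divide[OF open_region_chart]
  dir_deriv_sum[OF open_region_chart]

lemma cov1_altdef:
  "cov1 g A w B = (\<lambda>p. dir_deriv (e_x A) (w B) p - (\<Sum>C<2. Gam g C A B (xc p) * w C p))"
  by (simp add: fun_eq_iff cov1_def dx_eq_dir_deriv)

lemma cov2_altdef: "cov2 g C T A B = (\<lambda>p. dir_deriv (e_x C) (T A B) p
     - (\<Sum>D<2. Gam g D C A (xc p) * T D B p) - (\<Sum>D<2. Gam g D C B (xc p) * T A D p))"
  by (simp add: fun_eq_iff cov2_def dx_eq_dir_deriv)

lemma smooth_on_cov1 [simp]:
  "(\<And>C. smooth_on (region X) (w C)) \<Longrightarrow> smooth_on (region X) (cov1 g A w B)"
  unfolding cov1_altdef by simp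

lemma smooth_on_cov2 [simp]:
  "(\<And>A B. smooth_on (region X) (T A B)) \<Longrightarrow> smooth_on (region X) (cov2 g C T A B)"
  unfolding cov2_altdef by simp

lemma smooth_on_divT [simp]:
  "(\<And>A B. smooth_on (region X) (T A B)) \<Longrightarrow> smooth_on (region X) (divT g T A)"
  unfolding divT_def[abs_def] by simp

lemma smooth_on_TS [simp]:
  "(\<And>A B. smooth_on (region X) (Y A B)) \<Longrightarrow> smooth_on (region X) (TS g Y A B)"
  unfolding TS_def[abs_def] by simp

lemma smooth_on_Pop [simp]:
  "(\<And>A B. smooth_on (region X) (T A B)) \<Longrightarrow> smooth_on (region X) (Pop g T A B)"
  unfolding Pop_def by simp

lemma cov1_cong:
  assumes "\<And>C q. C < 2 \<Longrightarrow> q \<in> region X \<Longrightarrow> w C q = w' C q" "B < 2" "p \<in> region X"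
  shows "cov1 g A w B p = cov1 g A w' B p"
proof -
  have "dir_deriv (e_x A) (w B) p = dir_deriv (e_x A) (w' B) p"
    by (rule dir_deriv_cong) (use assms in auto)
  moreover have "(\<Sum>C<2. Gam g C A B (xc p) * w C p) = (\<Sum>C<2. Gam g C A B (xc p) * w' C p)"
    by (intro sum.cong refl) (simp add: assms)
  ultimately show ?thesis unfolding cov1_altdef by simp
qed

lemma cov2_cong:
  assumes "\<And>A B q. A < 2 \<Longrightarrow> B < 2 \<Longrightarrow> q \<in> region X \<Longrightarrow> T A B q = T' A B q"
    "A < 2" "B < 2" "p \<in> region X"
  shows "cov2 g C T A B p = cov2 g C T' A B p"
proof -
  have "dir_deriv (e_x C) (T A B) p = dir_deriv (e_x C) (T' A B) p"
    by (rule dir_deriv_cong) (use assms in auto)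
  moreover have "(\<Sum>D<2. Gam g D C A (xc p) * T D B p) = (\<Sum>D<2. Gam g D C A (xc p) * T' D B p)"
    "(\<Sum>D<2. Gam g D C B (xc p) * T A D p) = (\<Sum>D<2. Gam g D C B (xc p) * T' A D p)"
    by (intro sum.cong refl; simp add: assms)+
  ultimately show ?thesis unfolding cov2_altdef by simp
qed

lemma divT_cong:
  assumes "\<And>A B q. A < 2 \<Longrightarrow> B < 2 \<Longrightarrow> q \<in> region X \<Longrightarrow> T A B q = T' A B q"
    "A < 2" "p \<in> region X"
  shows "divT g T A p = divT g T' A p"
  unfolding divT_def using cov2_cong[OF assms(1,2) _ assms(3)] by (intro sum.cong refl) simp

lemma TS_cong:
  assumes "\<And>C D. C < 2 \<Longrightarrow> D < 2 \<Longrightarrow> Y C D p = Y' C D p" "A < 2" "B < 2"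
  shows "TS g Y A B p = TS g Y' A B p"
proof -
  have "(\<Sum>C<2. \<Sum>D<2. ginv g C D (xc p) * Y C D p) = (\<Sum>C<2. \<Sum>D<2. ginv g C D (xc p) * Y' C D p)"
    by (intro sum.cong refl) (simp add: assms)
  then show ?thesis unfolding TS_def using assms by simp
qed

lemma dir_deriv_cov1:
  assumes "xc v = 0" "\<And>C. smooth_on (region X) (w C)" "p \<in> region X"
  shows "dir_deriv v (cov1 g A w B) p = cov1 g A (\<lambda>B. dir_deriv v (w B)) B p"
  unfolding cov1_altdef using assms
  by (simp add: dir_deriv_region_simps dir_deriv_commute[OF open_region_chart assms(2,3), of v])

lemma dir_deriv_cov2:
  assumes "xc v = 0" "\<And>A B. smooth_on (region X) (T A B)" "p \<in> region X"
  shows "dir_deriv v (cov2 g C T A B) p = cov2 g C (\<lambda>A B. dir_deriv v (T A B)) A B p"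
  unfolding cov2_altdef using assms
  by (simp add: dir_deriv_region_simps dir_deriv_commute[OF open_region_chart assms(2,3), of v])

lemma dir_deriv_divT:
  assumes "xc v = 0" "\<And>A B. smooth_on (region X) (T A B)" "p \<in> region X"
  shows "dir_deriv v (divT g T A) p = divT g (\<lambda>A B. dir_deriv v (T A B)) A p"
  unfolding divT_def[abs_def] using assms by (simp add: dir_deriv_region_simps dir_deriv_cov2)

lemma dir_deriv_TS:
  assumes "xc v = 0" "\<And>A B. smooth_on (region X) (Y A B)" "p \<in> region X"
  shows "dir_deriv v (TS g Y A B) p = TS g (\<lambda>A B. dir_deriv v (Y A B)) A B p"
  unfolding TS_def[abs_def] using assms by (simp add: dir_deriv_region_simps algebra_simps)

lemma dir_deriv_TS_cov1:
  assumes "xc v = 0" "\<And>C. smooth_on (region X) (w C)" "p \<in> region X"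
  shows "dir_deriv v (TS g (\<lambda>A B. cov1 g A w B) A B) p
    = TS g (\<lambda>A B. cov1 g A (\<lambda>B. dir_deriv v (w B)) B) A B p"
  using assms by (simp add: dir_deriv_TS dir_deriv_cov1 TS_def)

lemma dir_deriv_Pop:
  assumes "xc v = 0" "\<And>A B. smooth_on (region X) (T A B)" "p \<in> region X" "A < 2" "B < 2"
  shows "dir_deriv v (Pop g T A B) p = Pop g (\<lambda>A B. dir_deriv v (T A B)) A B p"
proof -
  have "dir_deriv v (Pop g T A B) p = TS g (\<lambda>A B. cov1 g A (\<lambda>B. dir_deriv v (divT g T B)) B) A B p"
    unfolding Pop_def using assms by (simp add: dir_deriv_TS dir_deriv_cov1 TS_def)
  also have "\<dots> = Pop g (\<lambda>A B. dir_deriv v (T A B)) A B p"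
    unfolding Pop_def using assms
    by (intro TS_cong cov1_cong) (simp_all add: dir_deriv_divT)
  finally show ?thesis .
qed

lemma cov1_scale:
  assumes "\<And>C. smooth_on (region X) (w C)" "smooth_on (region X) c"
    "dir_deriv (e_x A) c p = 0" "p \<in> region X"
  shows "cov1 g A (\<lambda>B q. c q * w B q) B p = c p * cov1 g A w B p"
  unfolding cov1_altdef using assms
  by (simp add: dir_deriv_region_simps algebra_simps sum_distrib_left)

lemma cov2_scale:
  assumes "\<And>A B. smooth_on (region X) (T A B)" "smooth_on (region X) c"
    "dir_deriv (e_x C) c p = 0" "p \<in> region X"
  shows "cov2 g C (\<lambda>A B q. c q * T A B q) A B p = c p * cov2 g C T A B p"
  unfolding cov2_altdef using assms
  by (simp add: dir_deriv_region_simps algebra_simps sum_distrib_left)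

lemma divT_scale:
  assumes "\<And>A B. smooth_on (region X) (T A B)" "smooth_on (region X) c"
    "\<And>C. dir_deriv (e_x C) c p = 0" "p \<in> region X"
  shows "divT g (\<lambda>A B q. c q * T A B q) A p = c p * divT g T A p"
  unfolding divT_def[abs_def] using assms
  by (simp add: cov2_scale algebra_simps sum_distrib_left)

lemma TS_scale: "TS g (\<lambda>A B q. c q * Y A B q) A B p = c p * TS g Y A B p"
  unfolding TS_def by (simp add: algebra_simps sum_distrib_left)

end

section \<open>The radial identity\<close>

text \<open>The two sides of the first equation, the right-hand side of the second one, and \<open>Q\<close>,
  for fields \<open>H\<close>, \<open>H'\<close>, \<open>W\<close> standing for \<open>\<partial>\<^sub>u\<^sup>i hch\<close>, \<open>\<partial>\<^sub>u\<^sup>i\<^sup>+\<^sup>1 hch\<close>, \<open>\<partial>\<^sub>u\<^sup>i hcu\<close>.\<close>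

definition hu_constraint_lhs :: "(nat \<Rightarrow> pt \<Rightarrow> real) \<Rightarrow> nat \<Rightarrow> pt \<Rightarrow> real" where
  "hu_constraint_lhs W A = dr (\<lambda>q. rc q ^ 4 * dr (W A) q)"

definition hu_constraint_rhs :: "metric \<Rightarrow> (nat \<Rightarrow> nat \<Rightarrow> pt \<Rightarrow> real) \<Rightarrow> nat \<Rightarrow> pt \<Rightarrow> real" where
  "hu_constraint_rhs g H A = divT g (\<lambda>A B q. rc q ^ 2 * dr (H A B) q) A"

definition h_evolution ::
  "metric \<Rightarrow> real \<Rightarrow> real \<Rightarrow> real \<Rightarrow> (nat \<Rightarrow> nat \<Rightarrow> pt \<Rightarrow> real) \<Rightarrow> (nat \<Rightarrow> nat \<Rightarrow> pt \<Rightarrow> real)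
    \<Rightarrow> (nat \<Rightarrow> pt \<Rightarrow> real) \<Rightarrow> nat \<Rightarrow> nat \<Rightarrow> pt \<Rightarrow> real" where
  "h_evolution g eps a2 m H H' W A B p =
     dr (\<lambda>q. rc q * H' A B q - (1/2) * Vfun eps a2 m (rc q) * dr (H A B) q
          - Vfun eps a2 m (rc q) / (2 * rc q) * H A B q
          - rc q * TS g (\<lambda>A B. cov1 g A W B) A B q) p
     + (m / (rc p) ^ 2 - a2 * rc p) * H A B p - TS g (\<lambda>A B. cov1 g A W B) A B p"

definition Q3_tensor ::
  "metric \<Rightarrow> real \<Rightarrow> real \<Rightarrow> real \<Rightarrow> (nat \<Rightarrow> nat \<Rightarrow> pt \<Rightarrow> real) \<Rightarrow> (nat \<Rightarrow> nat \<Rightarrow> pt \<Rightarrow> real)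
    \<Rightarrow> (nat \<Rightarrow> pt \<Rightarrow> real) \<Rightarrow> nat \<Rightarrow> nat \<Rightarrow> pt \<Rightarrow> real" where
  "Q3_tensor g eps a2 m H H' W A B q =
     2 * rc q * H' A B q - Vfun eps a2 m (rc q) * dr (H A B) q
     - 1 / (rc q) ^ 2 * dr (\<lambda>q'. rc q' ^ 4 * TS g (\<lambda>A B. cov1 g A W B) A B q') q
     + Pop g H A B q - eps * H A B q"

definition Q3 ::
  "metric \<Rightarrow> real \<Rightarrow> real \<Rightarrow> real \<Rightarrow> (nat \<Rightarrow> nat \<Rightarrow> pt \<Rightarrow> real) \<Rightarrow> (nat \<Rightarrow> nat \<Rightarrow> pt \<Rightarrow> real)
    \<Rightarrow> (nat \<Rightarrow> pt \<Rightarrow> real) \<Rightarrow> nat \<Rightarrow> pt \<Rightarrow> real" where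
  "Q3 g eps a2 m H H' W A p =
     divT g (Q3_tensor g eps a2 m H H' W) A p
     + a2 * rc p ^ 4 * dr (W A) p + 2 * m * (3 * W A p + rc p * dr (W A) p)"

context chart
begin

lemmas dr_region_simps = dir_deriv_region_simps[where v = e_r, folded dr_eq_dir_deriv]

lemma dr_rc [simp]: "dr rc p = 1" and dr_const [simp]: "dr (\<lambda>q. c) p = 0"
  by (simp_all add: dr_eq_dir_deriv)

lemma dr_cong: "p \<in> region X \<Longrightarrow> (\<And>q. q \<in> region X \<Longrightarrow> f q = f' q) \<Longrightarrow> dr f p = dr f' p"
  unfolding dr_eq_dir_deriv by (rule dir_deriv_cong) auto

lemma smooth_on_dr [simp]: "smooth_on (region X) f \<Longrightarrow> smooth_on (region X) (dr f)"
  by (simp add: dr_eq_dir_deriv)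

lemma dr_TS_cov1:
  "(\<And>C. smooth_on (region X) (w C)) \<Longrightarrow> p \<in> region X \<Longrightarrow>
    dr (TS g (\<lambda>A B. cov1 g A w B) A B) p = TS g (\<lambda>A B. cov1 g A (\<lambda>B. dr (w B)) B) A B p"
  unfolding dr_eq_dir_deriv by (rule dir_deriv_TS_cov1) simp_all

lemma dr_divT:
  "(\<And>A B. smooth_on (region X) (T A B)) \<Longrightarrow> p \<in> region X \<Longrightarrow>
    dr (divT g T A) p = divT g (\<lambda>A B. dr (T A B)) A p"
  unfolding dr_eq_dir_deriv by (rule dir_deriv_divT) simp_all

lemma dr_Pop:
  "(\<And>A B. smooth_on (region X) (T A B)) \<Longrightarrow> p \<in> region X \<Longrightarrow> A < 2 \<Longrightarrow> B < 2 \<Longrightarrow>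
    dr (Pop g T A B) p = Pop g (\<lambda>A B. dr (T A B)) A B p"
  unfolding dr_eq_dir_deriv by (rule dir_deriv_Pop) simp_all

text \<open>Applying \<open>TS[D_A \<cdot>]\<close> to the first equation.\<close>
lemma dr_r4_dr_TS_cov1_eq_Pop:
  assumes H: "\<And>A B. smooth_on (region X) (H A B)" and W: "\<And>A. smooth_on (region X) (W A)"
    and eq1: "\<And>A q. A < 2 \<Longrightarrow> q \<in> region X \<Longrightarrow> hu_constraint_lhs W A q = hu_constraint_rhs g H A q"
    and AB: "A < 2" "B < 2" and q: "q \<in> region X"
  shows "dr (\<lambda>q. rc q ^ 4 * dr (TS g (\<lambda>A B. cov1 g A W B) A B) q) q
    = rc q ^ 2 * Pop g (\<lambda>A B. dr (H A B)) A B q"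
proof -
  define W4 where "W4 = (\<lambda>B q. rc q ^ 4 * dr (W B) q)"
  have W4: "smooth_on (region X) (W4 B)" for B by (simp add: W4_def W)
  have "rc y ^ 4 * dr (TS g (\<lambda>A B. cov1 g A W B) A B) y = TS g (\<lambda>A B. cov1 g A W4 B) A B y"
    if y: "y \<in> region X" for y
  proof -
    have "rc y ^ 4 * dr (TS g (\<lambda>A B. cov1 g A W B) A B) y
        = TS g (\<lambda>A B q. rc q ^ 4 * cov1 g A (\<lambda>B. dr (W B)) B q) A B y"
      by (simp add: dr_TS_cov1 TS_scale W y)
    also have "\<dots> = TS g (\<lambda>A B. cov1 g A W4 B) A B y"
      unfolding W4_def using W y by (intro TS_cong AB) (simp add: cov1_scale dir_deriv_const_along)
    finally show ?thesis .
  qed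
  then have "dr (\<lambda>q. rc q ^ 4 * dr (TS g (\<lambda>A B. cov1 g A W B) A B) q) q
      = dr (TS g (\<lambda>A B. cov1 g A W4 B) A B) q"
    by (rule dr_cong[OF q])
  also have "\<dots> = TS g (\<lambda>A B. cov1 g A (\<lambda>B. dr (W4 B)) B) A B q"
    by (rule dr_TS_cov1[OF W4 q])
  also have "\<dots> = TS g (\<lambda>A B. cov1 g A (\<lambda>B q. rc q ^ 2 * divT g (\<lambda>A B. dr (H A B)) B q) B) A B q"
    using eq1 H q unfolding W4_def hu_constraint_lhs_def hu_constraint_rhs_def
    by (intro TS_cong AB cov1_cong) (simp_all add: divT_scale dir_deriv_const_along)
  also have "\<dots> = TS g (\<lambda>A B q. rc q ^ 2 * cov1 g A (divT g (\<lambda>A B. dr (H A B))) B q) A B q"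
    using H q by (intro TS_cong AB) (simp add: cov1_scale dir_deriv_const_along)
  also have "\<dots> = rc q ^ 2 * Pop g (\<lambda>A B. dr (H A B)) A B q"
    unfolding Pop_def by (rule TS_scale)
  finally show ?thesis .
qed

lemma dr_Q3_tensor:
  fixes eps a2 m :: real
  defines "V \<equiv> Vfun eps a2 m"
  assumes H: "\<And>A B. smooth_on (region X) (H A B)" and H': "\<And>A B. smooth_on (region X) (H' A B)"
    and W: "\<And>A. smooth_on (region X) (W A)"
    and eq1: "\<And>A q. A < 2 \<Longrightarrow> q \<in> region X \<Longrightarrow> hu_constraint_lhs W A q = hu_constraint_rhs g H A q"
    and eq2: "\<And>q. q \<in> region X \<Longrightarrow> h_evolution g eps a2 m H H' W A B q = 0"
    and AB: "A < 2" "B < 2" and q: "q \<in> region X"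
  shows "dr (Q3_tensor g eps a2 m H H' W A B) q = (V (rc q) / rc q - eps) * dr (H A B) q"
proof -
  define T where "T = TS g (\<lambda>A B. cov1 g A W B) A B"
  define E where "E = (\<lambda>y. rc y * H' A B y - (1/2) * V (rc y) * dr (H A B) y
    - V (rc y) / (2 * rc y) * H A B y - rc y * T y)"
  define c where "c = (\<lambda>y. V (rc y) / rc y - eps)"
  have T: "smooth_on (region X) T" unfolding T_def using W by simp
  have E: "smooth_on (region X) E" unfolding E_def V_def Vfun_def using H H' T by simp
  have c: "smooth_on (region X) c" unfolding c_def V_def Vfun_def by simp
  have dE: "dr E q = T q - (m / rc q ^ 2 - a2 * rc q) * H A B q"
    using eq2[OF q] unfolding h_evolution_def E_def T_def V_def by simp
  \<comment> \<open>this cancels the undifferentiated \<open>H\<close>-terms of the second equation\<close>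
  have dc: "dr c q = 2 * (m / rc q ^ 2 - a2 * rc q)"
    unfolding c_def V_def Vfun_def using q by (simp add: dr_region_simps field_simps) algebra
  have P: "Pop g (\<lambda>A B. dr (H A B)) A B q = 4 * rc q * dr T q + rc q ^ 2 * dr (dr T) q"
  proof -
    have "rc q ^ 4 * dr (dr T) q + 4 * rc q ^ 3 * dr T q
        = rc q ^ 2 * Pop g (\<lambda>A B. dr (H A B)) A B q"
      using dr_r4_dr_TS_cov1_eq_Pop[OF H W eq1 AB q] T q
      by (simp add: T_def[symmetric] dr_region_simps)
    then have "rc q ^ 2 * Pop g (\<lambda>A B. dr (H A B)) A B q
        = rc q ^ 2 * (4 * rc q * dr T q + rc q ^ 2 * dr (dr T) q)"
      by algebra
    then show ?thesis using q by simp
  qed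
  have "Q3_tensor g eps a2 m H H' W A B y
      = 2 * E y + c y * H A B y - 2 * rc y * T y - rc y ^ 2 * dr T y + Pop g H A B y"
    if y: "y \<in> region X" for y
    unfolding Q3_tensor_def E_def c_def T_def[symmetric] V_def[symmetric] using T y
    by (simp add: dr_region_simps field_simps) algebra
  then have "dr (Q3_tensor g eps a2 m H H' W A B) q
      = dr (\<lambda>y. 2 * E y + c y * H A B y - 2 * rc y * T y - rc y ^ 2 * dr T y + Pop g H A B y) q"
    by (rule dr_cong[OF q])
  also have "\<dots> = 2 * dr E q + dr c q * H A B q + c q * dr (H A B) q - 2 * T q - 2 * rc q * dr T q
      - (2 * rc q * dr T q + rc q ^ 2 * dr (dr T) q) + Pop g (\<lambda>A B. dr (H A B)) A B q"
    using q H E T c AB by (simp add: dr_region_simps dr_Pop algebra_simps)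
  also have "\<dots> = c q * dr (H A B) q"
    unfolding dE dc P by algebra
  finally show ?thesis unfolding c_def .
qed

lemma dr_Q3_eq_0:
  assumes H: "\<And>A B. smooth_on (region X) (H A B)" and H': "\<And>A B. smooth_on (region X) (H' A B)"
    and W: "\<And>A. smooth_on (region X) (W A)"
    and eq1: "\<And>A q. A < 2 \<Longrightarrow> q \<in> region X \<Longrightarrow> hu_constraint_lhs W A q = hu_constraint_rhs g H A q"
    and eq2: "\<And>A B q. A < 2 \<Longrightarrow> B < 2 \<Longrightarrow> q \<in> region X \<Longrightarrow> h_evolution g eps a2 m H H' W A B q = 0"
    and A: "A < 2" and p: "p \<in> region X"
  shows "dr (Q3 g eps a2 m H H' W A) p = 0"
proof -
  define c where "c = (\<lambda>y. Vfun eps a2 m (rc y) / rc y - eps)"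
  define D where "D = divT g (\<lambda>A B. dr (H A B)) A p"
  have Q: "smooth_on (region X) (Q3_tensor g eps a2 m H H' W A B)" for A B
    unfolding Q3_tensor_def Vfun_def using H H' W by simp
  have "dr (divT g (Q3_tensor g eps a2 m H H' W) A) p
      = divT g (\<lambda>A B. dr (Q3_tensor g eps a2 m H H' W A B)) A p"
    by (rule dr_divT[OF Q p])
  also have "\<dots> = divT g (\<lambda>A B q. c q * dr (H A B) q) A p"
    using H H' W eq1 eq2 by (intro divT_cong A p) (simp add: dr_Q3_tensor c_def)
  also have "\<dots> = c p * D"
    unfolding D_def c_def Vfun_def using H p by (simp add: divT_scale dir_deriv_const_along)
  finally have dQ: "dr (divT g (Q3_tensor g eps a2 m H H' W) A) p = c p * D" .
  have "rc p ^ 2 * D = 4 * rc p ^ 3 * dr (W A) p + rc p ^ 4 * dr (dr (W A)) p"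
    using eq1[OF A p] H W p
    by (simp add: D_def hu_constraint_lhs_def hu_constraint_rhs_def dr_region_simps divT_scale
        dir_deriv_const_along)
  then have D: "D = (4 * rc p ^ 3 * dr (W A) p + rc p ^ 4 * dr (dr (W A)) p) / rc p ^ 2"
    using p by (simp add: field_simps)
  have "dr (Q3 g eps a2 m H H' W A) p = c p * D
      + a2 * (4 * rc p ^ 3 * dr (W A) p + rc p ^ 4 * dr (dr (W A)) p)
      + 2 * m * (3 * dr (W A) p + (dr (W A) p + rc p * dr (dr (W A)) p))"
    unfolding Q3_def using Q W p by (simp add: dQ dr_region_simps algebra_simps)
  also have "\<dots> = 0"
    unfolding D c_def Vfun_def using p by (simp add: field_simps) algebra
  finally show ?thesis .
qed

end

section \<open>Commuting \<open>u\<close>-derivatives through the equations\<close>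

context chart
begin

lemma du_cong: "p \<in> region X \<Longrightarrow> (\<And>q. q \<in> region X \<Longrightarrow> f q = f' q) \<Longrightarrow> du f p = du f' p"
  unfolding du_eq_dir_deriv by (rule dir_deriv_cong) auto

lemma smooth_on_du [simp]: "smooth_on (region X) f \<Longrightarrow> smooth_on (region X) (du f)"
  by (simp add: du_eq_dir_deriv)

lemma smooth_on_du_iter: "smooth_on (region X) f \<Longrightarrow> smooth_on (region X) ((du ^^ n) f)"
  by (induction n) simp_all

lemma du_dr: "smooth_on (region X) f \<Longrightarrow> p \<in> region X \<Longrightarrow> du (dr f) p = dr (du f) p"
  unfolding du_eq_dir_deriv dr_eq_dir_deriv by (rule dir_deriv_commute) simp_all

lemmas du_region_simps = dir_deriv_region_simps[where v = e_u, folded du_eq_dir_deriv]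

lemma du_rc [simp]: "du rc p = 0" and du_const [simp]: "du (\<lambda>q. c) p = 0"
  by (simp_all add: du_eq_dir_deriv)

lemma du_TS_cov1:
  "(\<And>C. smooth_on (region X) (w C)) \<Longrightarrow> p \<in> region X \<Longrightarrow>
    du (TS g (\<lambda>A B. cov1 g A w B) A B) p = TS g (\<lambda>A B. cov1 g A (\<lambda>B. du (w B)) B) A B p"
  unfolding du_eq_dir_deriv by (rule dir_deriv_TS_cov1) simp_all

lemma du_divT:
  "(\<And>A B. smooth_on (region X) (T A B)) \<Longrightarrow> p \<in> region X \<Longrightarrow>
    du (divT g T A) p = divT g (\<lambda>A B. du (T A B)) A p"
  unfolding du_eq_dir_deriv by (rule dir_deriv_divT) simp_all

lemma du_iter_commute:
  fixes \<Phi> :: "(nat \<Rightarrow> nat \<Rightarrow> pt \<Rightarrow> real) \<Rightarrow> (nat \<Rightarrow> pt \<Rightarrow> real) \<Rightarrow> pt \<Rightarrow> real"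
  assumes smooth_\<Phi>: "\<And>H W. (\<And>A B. smooth_on (region X) (H A B)) \<Longrightarrow> (\<And>A. smooth_on (region X) (W A))
      \<Longrightarrow> smooth_on (region X) (\<Phi> H W)"
    and du_\<Phi>: "\<And>H W q. (\<And>A B. smooth_on (region X) (H A B)) \<Longrightarrow> (\<And>A. smooth_on (region X) (W A))
      \<Longrightarrow> q \<in> region X \<Longrightarrow> du (\<Phi> H W) q = \<Phi> (\<lambda>A B. du (H A B)) (\<lambda>A. du (W A)) q"
    and H: "\<And>A B. smooth_on (region X) (H A B)" and W: "\<And>A. smooth_on (region X) (W A)"
    and p: "p \<in> region X"
  shows "(du ^^ n) (\<Phi> H W) p = \<Phi> (\<lambda>A B. (du ^^ n) (H A B)) (\<lambda>A. (du ^^ n) (W A)) p"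
  using p
proof (induction n arbitrary: p)
  case 0
  then show ?case by simp
next
  case (Suc n)
  have "(du ^^ Suc n) (\<Phi> H W) p = du ((du ^^ n) (\<Phi> H W)) p" by simp
  also have "\<dots> = du (\<Phi> (\<lambda>A B. (du ^^ n) (H A B)) (\<lambda>A. (du ^^ n) (W A))) p"
    by (rule du_cong[OF Suc.prems Suc.IH])
  also have "\<dots> = \<Phi> (\<lambda>A B. du ((du ^^ n) (H A B))) (\<lambda>A. du ((du ^^ n) (W A))) p"
    by (rule du_\<Phi>[OF smooth_on_du_iter[OF H] smooth_on_du_iter[OF W] Suc.prems])
  finally show ?case by simp
qed

lemma du_hu_constraint_lhs:
  assumes W: "\<And>A. smooth_on (region X) (W A)" and q: "q \<in> region X"
  shows "du (hu_constraint_lhs W A) q = hu_constraint_lhs (\<lambda>A. du (W A)) A q"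
proof -
  have "du (hu_constraint_lhs W A) q = dr (du (\<lambda>q. rc q ^ 4 * dr (W A) q)) q"
    unfolding hu_constraint_lhs_def using W q by (simp add: du_dr)
  also have "\<dots> = hu_constraint_lhs (\<lambda>A. du (W A)) A q"
    unfolding hu_constraint_lhs_def using W
    by (intro dr_cong q) (simp add: du_region_simps du_dr)
  finally show ?thesis .
qed

lemma du_hu_constraint_rhs:
  assumes H: "\<And>A B. smooth_on (region X) (H A B)" and A: "A < 2" and q: "q \<in> region X"
  shows "du (hu_constraint_rhs g H A) q = hu_constraint_rhs g (\<lambda>A B. du (H A B)) A q"
proof -
  have "du (hu_constraint_rhs g H A) q = divT g (\<lambda>A B. du (\<lambda>q. rc q ^ 2 * dr (H A B) q)) A q"
    unfolding hu_constraint_rhs_def using H q by (simp add: du_divT)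
  also have "\<dots> = hu_constraint_rhs g (\<lambda>A B. du (H A B)) A q"
    unfolding hu_constraint_rhs_def using H
    by (intro divT_cong A q) (simp add: du_region_simps du_dr)
  finally show ?thesis .
qed

lemma du_h_evolution:
  assumes H: "\<And>A B. smooth_on (region X) (H A B)" and W: "\<And>A. smooth_on (region X) (W A)"
    and q: "q \<in> region X"
  shows "du (h_evolution g eps a2 m H (\<lambda>A B. du (H A B)) W A B) q
    = h_evolution g eps a2 m (\<lambda>A B. du (H A B)) (\<lambda>A B. du (du (H A B))) (\<lambda>A. du (W A)) A B q"
proof -
  define E where "E = (\<lambda>H H' W q. rc q * H' A B q - (1/2) * Vfun eps a2 m (rc q) * dr (H A B) q
    - Vfun eps a2 m (rc q) / (2 * rc q) * H A B q - rc q * TS g (\<lambda>A B. cov1 g A W B) A B q)"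
  have E: "smooth_on (region X) (E H (\<lambda>A B. du (H A B)) W)"
    unfolding E_def Vfun_def using H W by simp
  have "du (E H (\<lambda>A B. du (H A B)) W) y
      = E (\<lambda>A B. du (H A B)) (\<lambda>A B. du (du (H A B))) (\<lambda>A. du (W A)) y"
    if y: "y \<in> region X" for y
    unfolding E_def Vfun_def using H W y by (simp add: du_region_simps du_dr du_TS_cov1)
  then have "du (dr (E H (\<lambda>A B. du (H A B)) W)) q
      = dr (E (\<lambda>A B. du (H A B)) (\<lambda>A B. du (du (H A B))) (\<lambda>A. du (W A))) q"
    unfolding du_dr[OF E q] by (rule dr_cong[OF q])
  moreover have "h_evolution g eps a2 m H H' W A B = (\<lambda>p. dr (E H H' W) p
      + (m / (rc p) ^ 2 - a2 * rc p) * H A B p - TS g (\<lambda>A B. cov1 g A W B) A B p)" for H H' W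
    unfolding h_evolution_def E_def ..
  ultimately show ?thesis
    using H W E q by (simp add: du_region_simps du_TS_cov1)
qed

lemma du_iter_hu_constraint_lhs:
  assumes W: "\<And>A. smooth_on (region X) (W A)" and p: "p \<in> region X"
  shows "(du ^^ n) (hu_constraint_lhs W A) p = hu_constraint_lhs (\<lambda>A. (du ^^ n) (W A)) A p"
proof (rule du_iter_commute[where \<Phi> = "\<lambda>H W. hu_constraint_lhs W A" and H = "\<lambda>A B q. 0",
      OF _ _ _ W p])
  show "smooth_on (region X) (hu_constraint_lhs W A)" if "\<And>A. smooth_on (region X) (W A)" for W
    unfolding hu_constraint_lhs_def using that by simp
qed (simp_all add: du_hu_constraint_lhs)

lemma du_iter_hu_constraint_rhs:
  assumes H: "\<And>A B. smooth_on (region X) (H A B)" and A: "A < 2" and p: "p \<in> region X"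
  shows "(du ^^ n) (hu_constraint_rhs g H A) p = hu_constraint_rhs g (\<lambda>A B. (du ^^ n) (H A B)) A p"
proof (rule du_iter_commute[where \<Phi> = "\<lambda>H W. hu_constraint_rhs g H A" and W = "\<lambda>A q. 0",
      OF _ _ H _ p])
  show "smooth_on (region X) (hu_constraint_rhs g H A)"
    if "\<And>A B. smooth_on (region X) (H A B)" for H
    unfolding hu_constraint_rhs_def using that by simp
qed (simp_all add: du_hu_constraint_rhs A)

lemma du_iter_h_evolution:
  assumes H: "\<And>A B. smooth_on (region X) (H A B)" and W: "\<And>A. smooth_on (region X) (W A)"
    and p: "p \<in> region X"
  shows "(du ^^ n) (h_evolution g eps a2 m H (\<lambda>A B. du (H A B)) W A B) p
    = h_evolution g eps a2 m (\<lambda>A B. (du ^^ n) (H A B)) (\<lambda>A B. (du ^^ Suc n) (H A B))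
        (\<lambda>A. (du ^^ n) (W A)) A B p"
proof -
  have "(du ^^ n) (h_evolution g eps a2 m H (\<lambda>A B. du (H A B)) W A B) p
    = h_evolution g eps a2 m (\<lambda>A B. (du ^^ n) (H A B)) (\<lambda>A B. du ((du ^^ n) (H A B)))
        (\<lambda>A. (du ^^ n) (W A)) A B p"
  proof (rule du_iter_commute[where \<Phi> = "\<lambda>H W. h_evolution g eps a2 m H (\<lambda>A B. du (H A B)) W A B",
        OF _ du_h_evolution H W p])
    show "smooth_on (region X) (h_evolution g eps a2 m H (\<lambda>A B. du (H A B)) W A B)"
      if "\<And>A B. smooth_on (region X) (H A B)" "\<And>A. smooth_on (region X) (W A)" for H W
      unfolding h_evolution_def Vfun_def using that by simp
  qed
  then show ?thesis by simp
qed

end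

theorem lemma3p1:
  fixes g :: metric and X :: "(real \<times> real) set"
    and eps m :: real and alpha :: complex
    and hu :: "nat \<Rightarrow> pt \<Rightarrow> real" and h :: "nat \<Rightarrow> nat \<Rightarrow> pt \<Rightarrow> real"
    and i :: nat
  defines "\<Omega> \<equiv> {p :: pt. 0 < rc p \<and> xc p \<in> X}"
  defines "a2 \<equiv> Re (alpha ^ 2)"
  defines "V \<equiv> Vfun eps a2 m"
  defines "hcu \<equiv> (\<lambda>A p. hu A p / (rc p) ^ 2)"
  defines "hch \<equiv> (\<lambda>A B p. h A B p / (rc p) ^ 2)"
  assumes X_open: "open X"
    and g_smooth: "\<And>A B. smooth_on X (g A B)"
    and g_sym: "\<And>A B x. x \<in> X \<Longrightarrow> g A B x = g B A x"
    and g_pos: "\<And>x. x \<in> X \<Longrightarrow> g 0 0 x > 0 \<and> gdet g x > 0"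
    and eps_vals: "eps \<in> {-1, 0, 1}"
    and g_curv: "\<And>x. x \<in> X \<Longrightarrow> gauss_curv g x = eps"
    and alpha_vals: "alpha \<in> \<real> \<or> Re alpha = 0"
    and hu_smooth: "\<And>A. smooth_on \<Omega> (hu A)"
    and h_smooth: "\<And>A B. smooth_on \<Omega> (h A B)"
    and h_sym: "\<And>A B p. p \<in> \<Omega> \<Longrightarrow> h A B p = h B A p"
    and h_traceless: "\<And>p. p \<in> \<Omega> \<Longrightarrow> (\<Sum>A<2. \<Sum>B<2. ginv g A B (xc p) * h A B p) = 0"
    and eq1: "\<And>A p. A < 2 \<Longrightarrow> p \<in> \<Omega> \<Longrightarrow>
       (du ^^ i) (dr (\<lambda>q. rc q ^ 4 * dr (hcu A) q)) p
       = (du ^^ i) (divT g (\<lambda>A B q. rc q ^ 2 * dr (hch A B) q) A) p"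
    and eq2: "\<And>A B p. A < 2 \<Longrightarrow> B < 2 \<Longrightarrow> p \<in> \<Omega> \<Longrightarrow>
       (du ^^ i) (\<lambda>p.
          dr (\<lambda>q. rc q * du (hch A B) q - (1/2) * V (rc q) * dr (hch A B) q
                   - V (rc q) / (2 * rc q) * hch A B q
                   - rc q * TS g (\<lambda>A B. cov1 g A hcu B) A B q) p
          + (m / (rc p) ^ 2 - a2 * rc p) * hch A B p
          - TS g (\<lambda>A B. cov1 g A hcu B) A B p) p = 0"
  defines "Hi \<equiv> (\<lambda>A B. (du ^^ i) (hch A B))"
    and "Hi1 \<equiv> (\<lambda>A B. (du ^^ Suc i) (hch A B))"
    and "Hui \<equiv> (\<lambda>A. (du ^^ i) (hcu A))"
  defines "Q \<equiv> (\<lambda>A p.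
       divT g (\<lambda>A B q. 2 * rc q * Hi1 A B q - V (rc q) * dr (Hi A B) q
           - 1 / (rc q) ^ 2 * dr (\<lambda>q'. rc q' ^ 4 * TS g (\<lambda>A B. cov1 g A Hui B) A B q') q
           + Pop g Hi A B q - eps * Hi A B q) A p
       + a2 * rc p ^ 4 * dr (Hui A) p
       + 2 * m * (3 * Hui A p + rc p * dr (Hui A) p))"
  shows "\<forall>A<2. \<forall>p\<in>\<Omega>. dr (Q A) p = 0"
proof -
  interpret chart g X
    using X_open g_smooth g_pos by unfold_locales (auto simp: less_imp_neq[symmetric])
  have \<Omega>: "\<Omega> = region X" unfolding \<Omega>_def region_def ..
  have hch: "\<And>A B. smooth_on (region X) (hch A B)" and hcu: "\<And>A. smooth_on (region X) (hcu A)"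
    unfolding hch_def hcu_def using h_smooth hu_smooth by (simp_all add: \<Omega>)
  have "hu_constraint_lhs Hui A p = hu_constraint_rhs g Hi A p" if "A < 2" "p \<in> region X" for A p
  proof -
    have "(du ^^ i) (hu_constraint_lhs hcu A) p = (du ^^ i) (hu_constraint_rhs g hch A) p"
      using eq1[unfolded \<Omega>, OF that] unfolding hu_constraint_lhs_def hu_constraint_rhs_def .
    then show ?thesis
      using hch hcu that unfolding Hui_def Hi_def
      by (simp add: du_iter_hu_constraint_lhs du_iter_hu_constraint_rhs)
  qed
  moreover have "h_evolution g eps a2 m Hi Hi1 Hui A B p = 0"
    if "A < 2" "B < 2" "p \<in> region X" for A B p
  proof -
    have "(du ^^ i) (h_evolution g eps a2 m hch (\<lambda>A B. du (hch A B)) hcu A B) p = 0"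
      using eq2[unfolded \<Omega>, OF that] unfolding h_evolution_def V_def .
    then show ?thesis
      using hch hcu that unfolding Hui_def Hi_def Hi1_def by (simp add: du_iter_h_evolution)
  qed
  moreover have "Q = Q3 g eps a2 m Hi Hi1 Hui"
    unfolding Q_def Q3_def Q3_tensor_def V_def ..
  ultimately show ?thesis
    using dr_Q3_eq_0 hch hcu unfolding \<Omega> Hi_def Hi1_def Hui_def
    by (simp add: smooth_on_du_iter)
qed

end
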